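(* Every two-player continuous time single controller additive reward (SC-AR) stochastic game possesses a stationary deterministic Blackwell-Nash equilibrium; that is, there exist stationary deterministic strategies $f^*,g^*$ and $\alpha_0>0$ such that $(f^*,g^* )$ is an $\alpha$-discounted Nash equilibrium for every $\alpha\in(0,\alpha_0]$.
   Context: A two-player continuous time stochastic game consists of a finite state set $S$, finite nonempty action sets $A^1(s),A^2(s)$, reward rates $r^i(s,a^1,a^2)$ ($i=1,2$), and transition rates $\mu(s',s,a^1,a^2)\ge0$ from $s$ to $s'\ne s$, with $\mu(s,s,a^1,a^2)=-\sum_{s'\ne s}\mu(s',s,a^1,a^2)$. Stationary strategies $f,g$ assign to each state a probability distribution on $A^1(s)$, resp. $A^2(s)$; they are deterministic if each such distribution is concentrated on one action. For a stationary pair, $r^i(s,f,g)=\sum_{a^1,a^2}f(s,a^1)g(s,a^2)r^i(s,a^1,a^2)$ and $Q(f,g)$ is the generator matrix with $Q(f,g)_{ss'}=\sum_{a^1,a^2}f(s,a^1)g(s,a^2)\mu(s',s,a^1,a^2)$. For $\alpha>0$ the $\alpha$-discounted payoff is $v^i_\alpha(f,g)=(\alpha I-Q(f,g))^{-1}r^i(f,g)$ (equivalently $E^s_{f,g}\int_0^\infty e^{-\alpha t}r^i(s_t,f,g)dt$). A stationary pair $(f^*,g^* )$ is an $\alpha$-discounted Nash equilibrium if for all $s$, $v^1_\alpha(s,f^*,g^* )\ge v^1_\alpha(s,f,g^* )$ for all stationary $f$ and $v^2_\alpha(s,f^*,g^* )\ge v^2_\alpha(s,f^*,g)$ for all stationary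 $g$. The game is SC-AR if (a) $\mu(s',s,a^1,a^2)=\mu(s',s,a^2)$ does not depend on $a^1$, and (b) $r^1(s,a^1,a^2)=r^1_1(s,a^1)+r^1_2(s,a^2)$ for some functions $r^1_1,r^1_2$, for all $s,a^1,a^2$. *)

theory Defs
  imports "HOL-Analysis.Analysis"
begin

text \<open>A two-player continuous time stochastic game on the finite state type 's.
  A1 s, A2 s: action sets; r i s a1 a2: reward rates; mu s' s a1 a2: transition rate
  from s to s'.\<close>

definition valid_game ::
  "('s::finite \<Rightarrow> 'a1 set) \<Rightarrow> ('s \<Rightarrow> 'a2 set) \<Rightarrow> ('s \<Rightarrow> 's \<Rightarrow> 'a1 \<Rightarrow> 'a2 \<Rightarrow> real) \<Rightarrow> bool" where
  "valid_game A1 A2 mu \<longleftrightarrow>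
     (\<forall>s. finite (A1 s) \<and> A1 s \<noteq> {} \<and> finite (A2 s) \<and> A2 s \<noteq> {}) \<and>
     (\<forall>s s' a1 a2. a1 \<in> A1 s \<longrightarrow> a2 \<in> A2 s \<longrightarrow> s' \<noteq> s \<longrightarrow> mu s' s a1 a2 \<ge> 0) \<and>
     (\<forall>s a1 a2. a1 \<in> A1 s \<longrightarrow> a2 \<in> A2 s \<longrightarrow>
        mu s s a1 a2 = - (\<Sum>s'\<in>UNIV - {s}. mu s' s a1 a2))"

definition SC_AR ::
  "('s::finite \<Rightarrow> 'a1 set) \<Rightarrow> ('s \<Rightarrow> 'a2 set) \<Rightarrow> ('s \<Rightarrow> 'a1 \<Rightarrow> 'a2 \<Rightarrow> real)
   \<Rightarrow> ('s \<Rightarrow> 's \<Rightarrow> 'a1 \<Rightarrow> 'a2 \<Rightarrow> real) \<Rightarrow> bool" where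
  "SC_AR A1 A2 r1 mu \<longleftrightarrow>
     (\<exists>mu2 :: 's \<Rightarrow> 's \<Rightarrow> 'a2 \<Rightarrow> real. \<forall>s s' a1 a2. a1 \<in> A1 s \<longrightarrow> a2 \<in> A2 s \<longrightarrow>
        mu s' s a1 a2 = mu2 s' s a2) \<and>
     (\<exists>(r11 :: 's \<Rightarrow> 'a1 \<Rightarrow> real) (r12 :: 's \<Rightarrow> 'a2 \<Rightarrow> real).
        \<forall>s a1 a2. a1 \<in> A1 s \<longrightarrow> a2 \<in> A2 s \<longrightarrow> r1 s a1 a2 = r11 s a1 + r12 s a2)"

definition stationary :: "('s \<Rightarrow> 'a set) \<Rightarrow> ('s \<Rightarrow> 'a \<Rightarrow> real) \<Rightarrow> bool" where
  "stationary A f \<longleftrightarrow> (\<forall>s. (\<forall>a\<in>A s. f s a \<ge> 0) \<and> (\<Sum>a\<in>A s. f s a) = 1)"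

definition deterministic :: "('s \<Rightarrow> 'a set) \<Rightarrow> ('s \<Rightarrow> 'a \<Rightarrow> real) \<Rightarrow> bool" where
  "deterministic A f \<longleftrightarrow> stationary A f \<and>
     (\<forall>s. \<exists>b\<in>A s. \<forall>a\<in>A s. f s a = (if a = b then 1 else 0))"

definition rew_vec ::
  "('s::finite \<Rightarrow> 'a1 set) \<Rightarrow> ('s \<Rightarrow> 'a2 set) \<Rightarrow> ('s \<Rightarrow> 'a1 \<Rightarrow> 'a2 \<Rightarrow> real)
   \<Rightarrow> ('s \<Rightarrow> 'a1 \<Rightarrow> real) \<Rightarrow> ('s \<Rightarrow> 'a2 \<Rightarrow> real) \<Rightarrow> real ^ 's" where
  "rew_vec A1 A2 r f g = (\<chi> s. \<Sum>a1\<in>A1 s. \<Sum>a2\<in>A2 s. f s a1 * g s a2 * r s a1 a2)"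

definition gen_mat ::
  "('s::finite \<Rightarrow> 'a1 set) \<Rightarrow> ('s \<Rightarrow> 'a2 set) \<Rightarrow> ('s \<Rightarrow> 's \<Rightarrow> 'a1 \<Rightarrow> 'a2 \<Rightarrow> real)
   \<Rightarrow> ('s \<Rightarrow> 'a1 \<Rightarrow> real) \<Rightarrow> ('s \<Rightarrow> 'a2 \<Rightarrow> real) \<Rightarrow> real ^ 's ^ 's" where
  "gen_mat A1 A2 mu f g = (\<chi> s s'. \<Sum>a1\<in>A1 s. \<Sum>a2\<in>A2 s. f s a1 * g s a2 * mu s' s a1 a2)"

definition disc_payoff ::
  "('s::finite \<Rightarrow> 'a1 set) \<Rightarrow> ('s \<Rightarrow> 'a2 set) \<Rightarrow> ('s \<Rightarrow> 's \<Rightarrow> 'a1 \<Rightarrow> 'a2 \<Rightarrow> real)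
   \<Rightarrow> ('s \<Rightarrow> 'a1 \<Rightarrow> 'a2 \<Rightarrow> real) \<Rightarrow> real
   \<Rightarrow> ('s \<Rightarrow> 'a1 \<Rightarrow> real) \<Rightarrow> ('s \<Rightarrow> 'a2 \<Rightarrow> real) \<Rightarrow> real ^ 's" where
  "disc_payoff A1 A2 mu r \<alpha> f g =
     matrix_inv (mat \<alpha> - gen_mat A1 A2 mu f g) *v rew_vec A1 A2 r f g"

definition disc_nash ::
  "('s::finite \<Rightarrow> 'a1 set) \<Rightarrow> ('s \<Rightarrow> 'a2 set) \<Rightarrow> ('s \<Rightarrow> 's \<Rightarrow> 'a1 \<Rightarrow> 'a2 \<Rightarrow> real)
   \<Rightarrow> ('s \<Rightarrow> 'a1 \<Rightarrow> 'a2 \<Rightarrow> real) \<Rightarrow> ('s \<Rightarrow> 'a1 \<Rightarrow> 'a2 \<Rightarrow> real) \<Rightarrow> real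
   \<Rightarrow> ('s \<Rightarrow> 'a1 \<Rightarrow> real) \<Rightarrow> ('s \<Rightarrow> 'a2 \<Rightarrow> real) \<Rightarrow> bool" where
  "disc_nash A1 A2 mu r1 r2 \<alpha> f g \<longleftrightarrow>
     stationary A1 f \<and> stationary A2 g \<and>
     (\<forall>f'. stationary A1 f' \<longrightarrow> (\<forall>s.
        disc_payoff A1 A2 mu r1 \<alpha> f g $ s \<ge> disc_payoff A1 A2 mu r1 \<alpha> f' g $ s)) \<and>
     (\<forall>g'. stationary A2 g' \<longrightarrow> (\<forall>s.
        disc_payoff A1 A2 mu r2 \<alpha> f g $ s \<ge> disc_payoff A1 A2 mu r2 \<alpha> f g' $ s))"

end

theory Submission
  imports Defs "HOL-Computational_Algebra.Polynomial"
begin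

text \<open>
  Since player 1 influences neither the transitions nor the summand \<open>r\<^sub>1\<^sub>2\<close> of his reward,
  against any stationary \<open>g\<close> he faces one fixed generator \<open>Q\<close>; the resolvent \<open>(\<alpha>I - Q)\<^sup>-\<^sup>1\<close> of a
  generator is a positive operator (maximum principle), so the pure strategy maximising
  \<open>r\<^sub>1\<^sub>1(s, \<cdot>)\<close> in every state is a best response to every \<open>g\<close> for every \<open>\<alpha>\<close>.

  Against this fixed strategy player 2 faces a continuous-time Markov decision process, and it
  remains to find a Blackwell optimal pure policy. By Cramer's rule each component of the value of
  a policy is a rational function of \<open>\<alpha>\<close> without poles in \<open>(0, \<infinity>)\<close>, so each of the finitely many
  comparisons between values of pure policies has a constant outcome on some interval \<open>(0, \<epsilon>)\<close>.
  A pure policy that is optimal for one \<open>\<beta>\<close> in this interval (one exists by policy improvement)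
  therefore beats every pure policy for all \<open>\<alpha> \<le> \<beta>\<close>; such a policy admits no improving
  deviation, hence is optimal among all stationary policies.
\<close>

section \<open>Generator matrices and the maximum principle\<close>

definition generator :: "real^'s::finite^'s \<Rightarrow> bool" where
  "generator Q \<longleftrightarrow> (\<forall>s s'. s' \<noteq> s \<longrightarrow> 0 \<le> Q$s$s') \<and> (\<forall>s. (\<Sum>s'\<in>UNIV. Q$s$s') = 0)"

lemma mat_minus_mult_vec_nth:
  fixes Q :: "'a::comm_ring_1^'n::finite^'n"
  shows "((mat \<alpha> - Q) *v v)$s = \<alpha> * v$s - (\<Sum>t\<in>UNIV. Q$s$t * v$t)"
  by (simp add: matrix_vector_mult_def mat_def left_diff_distrib sum_subtractf
      if_distrib[of "\<lambda>x. x * _"] cong: if_cong)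

lemma generator_sum_at_argmin_nonneg:
  assumes "generator Q" and min: "\<And>t. v$m \<le> v$t"
  shows "0 \<le> (\<Sum>t\<in>UNIV. Q$m$t * v$t)"
proof -
  have "(\<Sum>t\<in>UNIV. Q$m$t * v$t) = (\<Sum>t\<in>UNIV. Q$m$t * (v$t - v$m))"
    using assms(1) by (simp add: generator_def right_diff_distrib sum_subtractf
        flip: sum_distrib_right)
  also have "\<dots> \<ge> 0"
  proof (rule sum_nonneg)
    fix t
    show "0 \<le> Q$m$t * (v$t - v$m)"
      using assms(1) min[of t] by (cases "t = m") (simp_all add: generator_def)
  qed
  finally show ?thesis .
qed

lemma generator_max_principle:
  assumes "generator Q" "0 < \<alpha>" "\<And>t. 0 \<le> ((mat \<alpha> - Q) *v v)$t"
  shows "0 \<le> v$s"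
proof -
  obtain m where min: "\<And>t. v$m \<le> v$t"
    using ex_is_arg_min_if_finite[of UNIV "($) v"] by (auto simp: is_arg_min_linorder)
  have "0 \<le> \<alpha> * v$m - (\<Sum>t\<in>UNIV. Q$m$t * v$t)"
    using assms(3)[of m] by (simp only: mat_minus_mult_vec_nth)
  with generator_sum_at_argmin_nonneg[OF assms(1) min] have "0 \<le> \<alpha> * v$m"
    by linarith
  with \<open>0 < \<alpha>\<close> min[of s] show ?thesis
    by (simp add: zero_le_mult_iff)
qed

lemma generator_strict_max_principle:
  assumes "generator Q" "0 < \<alpha>" "\<And>t. 0 \<le> ((mat \<alpha> - Q) *v v)$t"
    and "0 < ((mat \<alpha> - Q) *v v)$s"
  shows "0 < v$s"
proof (rule ccontr)
  assume "\<not> 0 < v$s"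
  with generator_max_principle[OF assms(1-3)] have nonneg: "\<And>t. 0 \<le> v$t" and "v$s = 0"
    by (auto simp: order.order_iff_strict)
  have "0 \<le> (\<Sum>t\<in>UNIV. Q$s$t * v$t)"
  proof (rule sum_nonneg)
    fix t
    show "0 \<le> Q$s$t * v$t"
      using assms(1) nonneg[of t] \<open>v$s = 0\<close> by (cases "t = s") (simp_all add: generator_def)
  qed
  with assms(4) \<open>v$s = 0\<close> show False
    by (simp add: mat_minus_mult_vec_nth)
qed

lemma generator_resolvent_invertible:
  assumes "generator Q" "0 < \<alpha>"
  shows "invertible (mat \<alpha> - Q)"
  unfolding invertible_left_inverse matrix_left_invertible_ker
proof (intro allI impI)
  fix x assume kernel: "(mat \<alpha> - Q) *v x = 0"
  then have kernel_neg: "(mat \<alpha> - Q) *v (- x) = 0"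
    using linear_neg[OF matrix_vector_mul_linear, of "mat \<alpha> - Q" x] by simp
  have "0 \<le> x$s" "0 \<le> (- x)$s" for s
    using generator_max_principle[OF assms, of x] generator_max_principle[OF assms, of "- x"]
      kernel kernel_neg by simp_all
  then show "x = 0"
    by (auto simp: vec_eq_iff intro: order.antisym)
qed

lemma invertible_mult_matrix_inv_vec:
  fixes M :: "'a::semiring_1^'n^'n"
  assumes "invertible M"
  shows "M *v (matrix_inv M *v r) = r"
proof -
  have "M ** matrix_inv M = mat 1"
    using someI_ex[OF assms[unfolded invertible_def]] by (simp add: matrix_inv_def)
  then show ?thesis
    by (simp add: matrix_vector_mul_assoc)
qed

lemma resolvent_mono:
  assumes "generator Q" "0 < \<alpha>" "\<And>t. r$t \<le> r'$t"
  shows "(matrix_inv (mat \<alpha> - Q) *v r)$s \<le> (matrix_inv (mat \<alpha> - Q) *v r')$s"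
proof -
  let ?M = "mat \<alpha> - Q"
  have inv: "invertible ?M"
    using generator_resolvent_invertible[OF assms(1,2)] .
  have eq: "?M *v (matrix_inv ?M *v r' - matrix_inv ?M *v r) = r' - r"
    unfolding matrix_vector_mult_diff_distrib invertible_mult_matrix_inv_vec[OF inv] ..
  have "0 \<le> (matrix_inv ?M *v r' - matrix_inv ?M *v r)$s"
    by (rule generator_max_principle[OF assms(1,2)]) (simp add: eq assms(3))
  then show ?thesis by simp
qed


section \<open>Rational dependence on the discount rate\<close>

lemma poly_det:
  fixes P :: "real poly^'n::finite^'n"
  shows "poly (det P) x = det (\<chi> i j. poly (P$i$j) x)"
  unfolding det_def by (simp add: poly_sum poly_prod)

lemma resolvent_nth_rational:
  fixes Q :: "real^'s::finite^'s"
  obtains D N where "\<And>\<alpha>. poly D \<alpha> = det (mat \<alpha> - Q)"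
    and "\<And>\<alpha>. det (mat \<alpha> - Q) \<noteq> 0 \<Longrightarrow> (matrix_inv (mat \<alpha> - Q) *v r)$k = poly N \<alpha> / poly D \<alpha>"
proof -
  define PM :: "real poly^'s^'s" where "PM = (\<chi> i j. (if i = j then [:0, 1:] else 0) - [:Q$i$j:])"
  define D where "D = det PM"
  define N where "N = det (\<chi> i j. if j = k then [:r$i:] else PM$i$j)"
  have eval_PM: "(\<chi> i j. poly (PM$i$j) \<alpha>) = mat \<alpha> - Q" for \<alpha>
    by (simp add: PM_def vec_eq_iff mat_def)
  have D: "poly D \<alpha> = det (mat \<alpha> - Q)" for \<alpha>
    unfolding D_def poly_det eval_PM ..
  have N: "poly N \<alpha> = det (\<chi> i j. if j = k then r$i else (mat \<alpha> - Q)$i$j)" for \<alpha>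
    unfolding N_def poly_det by (rule arg_cong[where f = det]) (simp add: vec_eq_iff PM_def mat_def)
  show ?thesis
  proof
    fix \<alpha> :: real assume nz: "det (mat \<alpha> - Q) \<noteq> 0"
    have "(mat \<alpha> - Q) *v (matrix_inv (mat \<alpha> - Q) *v r) = r"
      using nz by (simp add: invertible_det_nz invertible_mult_matrix_inv_vec)
    then show "(matrix_inv (mat \<alpha> - Q) *v r)$k = poly N \<alpha> / poly D \<alpha>"
      unfolding cramer[OF nz] by (simp add: N D)
  qed (rule D)
qed

lemma poly_sign_eventually_constant_at_right:
  fixes p :: "real poly"
  shows "(\<forall>\<^sub>F x in at_right a. 0 \<le> poly p x) \<or> (\<forall>\<^sub>F x in at_right a. poly p x < 0)"
proof (cases "p = 0")
  case False
  obtain q where p: "p = [:- a, 1:] ^ order a p * q" and "\<not> [:- a, 1:] dvd q"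
    using order_decomp[OF False] by blast
  then have "poly q a \<noteq> 0"
    by (simp add: poly_eq_0_iff_dvd)
  have q_lim: "(poly q \<longlongrightarrow> poly q a) (at_right a)"
    by (intro tendsto_intros)
  have sign_p: "0 \<le> poly p x \<longleftrightarrow> 0 \<le> poly q x" if "a < x" for x
  proof -
    have "0 < (x - a) ^ order a p"
      using that by simp
    then show ?thesis
      by (subst p) (auto simp: zero_le_mult_iff)
  qed
  show ?thesis
  proof (cases "0 < poly q a")
    case True
    with q_lim have "\<forall>\<^sub>F x in at_right a. 0 < poly q x"
      by (rule order_tendstoD)
    with eventually_at_right_less[of a] have "\<forall>\<^sub>F x in at_right a. 0 \<le> poly p x"
      by eventually_elim (simp add: sign_p)
    then show ?thesis ..
  next
    case False
    with \<open>poly q a \<noteq> 0\<close> have "poly q a < 0"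
      by linarith
    with q_lim have "\<forall>\<^sub>F x in at_right a. poly q x < 0"
      by (rule order_tendstoD)
    with eventually_at_right_less[of a] have "\<forall>\<^sub>F x in at_right a. poly p x < 0"
      by eventually_elim (simp add: sign_p not_le[symmetric])
    then show ?thesis ..
  qed
qed simp

lemma quotient_sign_eventually_constant_at_right:
  fixes N D :: "real poly"
  shows "(\<forall>\<^sub>F x in at_right a. 0 \<le> poly N x / poly D x) \<or> (\<forall>\<^sub>F x in at_right a. poly N x / poly D x < 0)"
proof -
  have "0 \<le> n / d \<longleftrightarrow> 0 \<le> n * d" for n d :: real
    by (auto simp: zero_le_divide_iff zero_le_mult_iff)
  then show ?thesis
    using poly_sign_eventually_constant_at_right[of "N * D" a]
    by (simp add: not_le[symmetric])
qed

lemma eventually_ball_iff_eventually: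
  assumes "finite I" "\<And>i. i \<in> I \<Longrightarrow> (\<forall>\<^sub>F x in F. P i x) \<or> (\<forall>\<^sub>F x in F. \<not> P i x)"
  shows "\<forall>\<^sub>F x in F. \<forall>i\<in>I. P i x \<longleftrightarrow> (\<forall>\<^sub>F y in F. P i y)"
proof (rule eventually_ball_finite[OF assms(1)], rule ballI)
  fix i assume "i \<in> I"
  with assms(2) consider "\<forall>\<^sub>F x in F. P i x" | "\<forall>\<^sub>F x in F. \<not> P i x" "\<not> (\<forall>\<^sub>F x in F. P i x)"
    by blast
  then show "\<forall>\<^sub>F x in F. P i x \<longleftrightarrow> (\<forall>\<^sub>F y in F. P i y)"
    by cases (auto elim: eventually_mono)
qed


section \<open>Continuous-time Markov decision processes\<close>

definition mdp :: "('s::finite \<Rightarrow> 'a set) \<Rightarrow> ('s \<Rightarrow> 's \<Rightarrow> 'a \<Rightarrow> real) \<Rightarrow> bool" where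
  "mdp A P \<longleftrightarrow> (\<forall>s. finite (A s) \<and> A s \<noteq> {}) \<and>
     (\<forall>s s' a. a \<in> A s \<longrightarrow> s' \<noteq> s \<longrightarrow> 0 \<le> P s s' a) \<and>
     (\<forall>s a. a \<in> A s \<longrightarrow> (\<Sum>s'\<in>UNIV. P s s' a) = 0)"

definition policy_generator ::
  "('s::finite \<Rightarrow> 'a set) \<Rightarrow> ('s \<Rightarrow> 's \<Rightarrow> 'a \<Rightarrow> real) \<Rightarrow> ('s \<Rightarrow> 'a \<Rightarrow> real) \<Rightarrow> real^'s^'s" where
  "policy_generator A P g = (\<chi> s s'. \<Sum>a\<in>A s. g s a * P s s' a)"

definition policy_reward ::
  "('s::finite \<Rightarrow> 'a set) \<Rightarrow> ('s \<Rightarrow> 'a \<Rightarrow> real) \<Rightarrow> ('s \<Rightarrow> 'a \<Rightarrow> real) \<Rightarrow> real^'s" where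
  "policy_reward A R g = (\<chi> s. \<Sum>a\<in>A s. g s a * R s a)"

definition policy_value ::
  "('s::finite \<Rightarrow> 'a set) \<Rightarrow> ('s \<Rightarrow> 's \<Rightarrow> 'a \<Rightarrow> real) \<Rightarrow> ('s \<Rightarrow> 'a \<Rightarrow> real) \<Rightarrow> real
   \<Rightarrow> ('s \<Rightarrow> 'a \<Rightarrow> real) \<Rightarrow> real^'s" where
  "policy_value A P R \<alpha> g = matrix_inv (mat \<alpha> - policy_generator A P g) *v policy_reward A R g"

definition pure_policy :: "('s \<Rightarrow> 'a) \<Rightarrow> 's \<Rightarrow> 'a \<Rightarrow> real" where
  "pure_policy d = (\<lambda>s a. if a = d s then 1 else 0)"

definition advantage ::
  "('s::finite \<Rightarrow> 's \<Rightarrow> 'a \<Rightarrow> real) \<Rightarrow> ('s \<Rightarrow> 'a \<Rightarrow> real) \<Rightarrow> real \<Rightarrow> real^'s \<Rightarrow> 's \<Rightarrow> 'a \<Rightarrow> real" where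
  "advantage P R \<alpha> v s a = R s a + (\<Sum>t\<in>UNIV. P s t a * v$t) - \<alpha> * v$s"

lemma generator_policy_generator:
  fixes A :: "'s::finite \<Rightarrow> 'a set"
  assumes "mdp A P" "stationary A g"
  shows "generator (policy_generator A P g)"
  unfolding generator_def
proof (intro conjI allI impI)
  fix s s' :: 's assume "s' \<noteq> s"
  then show "0 \<le> policy_generator A P g $ s $ s'"
    using assms unfolding policy_generator_def mdp_def stationary_def
    by (auto intro!: sum_nonneg mult_nonneg_nonneg)
next
  fix s
  have "(\<Sum>s'\<in>UNIV. policy_generator A P g $ s $ s') = (\<Sum>a\<in>A s. g s a * (\<Sum>s'\<in>UNIV. P s s' a))"
    unfolding policy_generator_def by (simp add: sum_distrib_left sum.swap[of _ "A s"])
  also have "\<dots> = 0"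
    using assms(1) by (simp add: mdp_def)
  finally show "(\<Sum>s'\<in>UNIV. policy_generator A P g $ s $ s') = 0" .
qed

lemma policy_value_equation:
  assumes "mdp A P" "stationary A g" "0 < \<alpha>"
  shows "(mat \<alpha> - policy_generator A P g) *v policy_value A P R \<alpha> g = policy_reward A R g"
  unfolding policy_value_def
  by (rule invertible_mult_matrix_inv_vec[OF generator_resolvent_invertible
        [OF generator_policy_generator[OF assms(1,2)] assms(3)]])

lemma policy_reward_minus_resolvent_nth:
  assumes "stationary A g"
  shows "(policy_reward A R g - (mat \<alpha> - policy_generator A P g) *v v)$t
       = (\<Sum>a\<in>A t. g t a * advantage P R \<alpha> v t a)"
proof -
  have "(\<Sum>a\<in>A t. g t a * advantage P R \<alpha> v t a)
      = (\<Sum>a\<in>A t. g t a * R t a) + (\<Sum>a\<in>A t. g t a * (\<Sum>t'\<in>UNIV. P t t' a * v$t'))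
        - (\<Sum>a\<in>A t. g t a) * (\<alpha> * v$t)"
    by (simp add: advantage_def algebra_simps sum.distrib sum_subtractf sum_distrib_left
        sum_distrib_right)
  also have "(\<Sum>a\<in>A t. g t a * (\<Sum>t'\<in>UNIV. P t t' a * v$t'))
           = (\<Sum>t'\<in>UNIV. policy_generator A P g $ t $ t' * v$t')"
    by (simp add: policy_generator_def sum_distrib_left sum_distrib_right sum.swap[of _ "A t"]
        mult.assoc)
  finally show ?thesis
    using assms by (simp add: stationary_def policy_reward_def mat_minus_mult_vec_nth)
qed

lemma stationary_pure_policy:
  assumes "\<forall>s. d s \<in> A s" "\<forall>s. finite (A s)"
  shows "stationary A (pure_policy d)"
  using assms unfolding stationary_def pure_policy_def by (simp add: sum.delta')

lemma deterministic_pure_policy: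
  assumes "\<forall>s. d s \<in> A s" "\<forall>s. finite (A s)"
  shows "deterministic A (pure_policy d)"
  using assms stationary_pure_policy[OF assms] unfolding deterministic_def
  by (auto simp: pure_policy_def)

lemma sum_pure_policy:
  assumes "d s \<in> A s" "finite (A s)"
  shows "(\<Sum>a\<in>A s. pure_policy d s a * X a) = X (d s)"
  using assms by (simp add: pure_policy_def if_distrib[of "\<lambda>x. x * _"] sum.delta' cong: if_cong)

lemma advantage_pure_policy_value:
  assumes "mdp A P" "\<forall>s. d s \<in> A s" "0 < \<alpha>"
  shows "advantage P R \<alpha> (policy_value A P R \<alpha> (pure_policy d)) t (d t) = 0"
proof -
  have fin: "\<forall>s. finite (A s)"
    using assms(1) by (simp add: mdp_def)
  note stat = stationary_pure_policy[OF assms(2) fin]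
  show ?thesis
    using policy_reward_minus_resolvent_nth[OF stat, of R \<alpha> P "policy_value A P R \<alpha> (pure_policy d)" t]
    by (simp add: policy_value_equation[OF assms(1) stat assms(3)] sum_pure_policy assms(2) fin)
qed

lemma policy_value_le_if_advantage_nonpos:
  assumes "mdp A P" "0 < \<alpha>" "\<forall>s. \<forall>a\<in>A s. advantage P R \<alpha> v s a \<le> 0" "stationary A g"
  shows "policy_value A P R \<alpha> g $ s \<le> v $ s"
proof -
  let ?M = "mat \<alpha> - policy_generator A P g"
  have residual: "(?M *v (v - policy_value A P R \<alpha> g))$t = - (\<Sum>a\<in>A t. g t a * advantage P R \<alpha> v t a)"
    for t
    using policy_reward_minus_resolvent_nth[OF assms(4), of R \<alpha> P v t]
    by (simp add: matrix_vector_mult_diff_distrib policy_value_equation[OF assms(1,4,2)])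
  have nonpos: "(\<Sum>a\<in>A t. g t a * advantage P R \<alpha> v t a) \<le> 0" for t
    using assms(3,4) unfolding stationary_def by (intro sum_nonpos) (simp add: mult_nonneg_nonpos)
  have "0 \<le> (v - policy_value A P R \<alpha> g)$s"
    by (rule generator_max_principle[OF generator_policy_generator[OF assms(1,4)] assms(2)])
      (simp add: residual nonpos)
  then show ?thesis by simp
qed

lemma policy_value_improvement:
  assumes "mdp A P" "\<forall>s. d s \<in> A s" "0 < \<alpha>" "a \<in> A s0"
    and pos: "0 < advantage P R \<alpha> (policy_value A P R \<alpha> (pure_policy d)) s0 a"
  shows "\<And>t. policy_value A P R \<alpha> (pure_policy d) $ t \<le> policy_value A P R \<alpha> (pure_policy (d(s0 := a))) $ t"
    and "policy_value A P R \<alpha> (pure_policy d) $ s0 < policy_value A P R \<alpha> (pure_policy (d(s0 := a))) $ s0"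
proof -
  have fin: "\<forall>s. finite (A s)"
    using assms(1) by (simp add: mdp_def)
  let ?d' = "d(s0 := a)"
  let ?v = "policy_value A P R \<alpha> (pure_policy d)"
  let ?v' = "policy_value A P R \<alpha> (pure_policy ?d')"
  let ?M = "mat \<alpha> - policy_generator A P (pure_policy ?d')"
  have d': "\<forall>s. ?d' s \<in> A s"
    using assms(2,4) by simp
  note stat' = stationary_pure_policy[OF d' fin]
  have residual: "(?M *v (?v' - ?v))$t = advantage P R \<alpha> ?v t (?d' t)" for t
  proof -
    have "(?M *v (?v' - ?v))$t = (policy_reward A R (pure_policy ?d') - ?M *v ?v)$t"
      by (simp only: matrix_vector_mult_diff_distrib policy_value_equation[OF assms(1) stat' assms(3)])
    also have "\<dots> = (\<Sum>b\<in>A t. pure_policy ?d' t b * advantage P R \<alpha> ?v t b)"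
      by (rule policy_reward_minus_resolvent_nth[OF stat'])
    also have "\<dots> = advantage P R \<alpha> ?v t (?d' t)"
      using d' fin by (intro sum_pure_policy) auto
    finally show ?thesis .
  qed
  have nonneg: "0 \<le> (?M *v (?v' - ?v))$t" for t
    using pos advantage_pure_policy_value[OF assms(1-3), of R t] by (cases "t = s0") (simp_all add: residual)
  note gen = generator_policy_generator[OF assms(1) stat']
  show "?v $ t \<le> ?v' $ t" for t
    using generator_max_principle[OF gen assms(3) nonneg, of t] by simp
  show "?v $ s0 < ?v' $ s0"
    using generator_strict_max_principle[OF gen assms(3) nonneg, of s0] pos by (simp add: residual)
qed

lemma finite_Pi_UNIV:
  fixes A :: "'s::finite \<Rightarrow> 'a set"
  assumes "\<forall>s. finite (A s)"
  shows "finite (Pi UNIV A)"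
  unfolding PiE_UNIV_domain[symmetric] using assms by (intro finite_PiE) auto

lemma ex_pure_policy_advantage_nonpos:
  assumes "mdp A P" "0 < \<alpha>"
  obtains d where "\<forall>s. d s \<in> A s"
    and "\<forall>s. \<forall>a\<in>A s. advantage P R \<alpha> (policy_value A P R \<alpha> (pure_policy d)) s a \<le> 0"
proof -
  define total where "total d = (\<Sum>s\<in>UNIV. policy_value A P R \<alpha> (pure_policy d) $ s)" for d
  have "finite (Pi UNIV A)" "Pi UNIV A \<noteq> {}"
    using assms(1) finite_Pi_UNIV[of A] by (auto simp: mdp_def Pi_eq_empty)
  then obtain d where d: "\<forall>s. d s \<in> A s" and max: "\<And>d'. \<forall>s. d' s \<in> A s \<Longrightarrow> total d' \<le> total d"
    using ex_is_arg_min_if_finite[of "Pi UNIV A" "\<lambda>d. - total d"]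
    by (auto simp: is_arg_min_linorder Pi_iff)
  have "advantage P R \<alpha> (policy_value A P R \<alpha> (pure_policy d)) s a \<le> 0" if "a \<in> A s" for s a
  proof (rule ccontr)
    assume "\<not> ?thesis"
    then have pos: "0 < advantage P R \<alpha> (policy_value A P R \<alpha> (pure_policy d)) s a"
      by simp
    note improved = policy_value_improvement[OF assms(1) d assms(2) that pos]
    have "total d < total (d(s := a))"
      unfolding total_def by (rule sum_strict_mono_ex1) (use improved in auto)
    moreover have "\<forall>t. (d(s := a)) t \<in> A t"
      using d that by simp
    ultimately show False
      using max by (meson not_le)
  qed
  with d show ?thesis
    using that by blast
qed

lemma policy_value_le_if_pure_optimal:
  assumes "mdp A P" "0 < \<alpha>" "\<forall>s. d s \<in> A s"
    and opt: "\<And>d' t. \<forall>s. d' s \<in> A s \<Longrightarrow>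
      policy_value A P R \<alpha> (pure_policy d') $ t \<le> policy_value A P R \<alpha> (pure_policy d) $ t"
    and "stationary A g"
  shows "policy_value A P R \<alpha> g $ s \<le> policy_value A P R \<alpha> (pure_policy d) $ s"
proof (rule policy_value_le_if_advantage_nonpos[OF assms(1,2) _ assms(5)], intro allI ballI)
  fix t a assume "a \<in> A t"
  show "advantage P R \<alpha> (policy_value A P R \<alpha> (pure_policy d)) t a \<le> 0"
  proof (rule ccontr)
    assume "\<not> ?thesis"
    then have "policy_value A P R \<alpha> (pure_policy d) $ t < policy_value A P R \<alpha> (pure_policy (d(t := a))) $ t"
      using policy_value_improvement(2)[OF assms(1,3,2) \<open>a \<in> A t\<close>] by simp
    moreover have "\<forall>s. (d(t := a)) s \<in> A s"
      using assms(3) \<open>a \<in> A t\<close> by simp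
    ultimately show False
      using opt by (meson not_le)
  qed
qed

lemma policy_value_rational:
  assumes "mdp A P" "stationary A g"
  obtains D N where "\<And>\<alpha>. 0 < \<alpha> \<Longrightarrow> poly D \<alpha> \<noteq> 0"
    and "\<And>\<alpha>. 0 < \<alpha> \<Longrightarrow> policy_value A P R \<alpha> g $ s = poly N \<alpha> / poly D \<alpha>"
proof -
  let ?Q = "policy_generator A P g"
  obtain N D where D: "\<And>\<alpha>. poly D \<alpha> = det (mat \<alpha> - ?Q)"
    and N: "\<And>\<alpha>. det (mat \<alpha> - ?Q) \<noteq> 0 \<Longrightarrow>
      (matrix_inv (mat \<alpha> - ?Q) *v policy_reward A R g)$s = poly N \<alpha> / poly D \<alpha>"
    using resolvent_nth_rational[where r = "policy_reward A R g" and k = s] by blast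
  have nz: "det (mat \<alpha> - ?Q) \<noteq> 0" if "0 < \<alpha>" for \<alpha>
    using generator_resolvent_invertible[OF generator_policy_generator[OF assms] that]
    by (simp add: invertible_det_nz)
  show ?thesis
    by (rule that[of D N]) (simp_all add: D nz N policy_value_def)
qed

lemma policy_value_order_eventually_constant:
  assumes "mdp A P" "stationary A g" "stationary A h"
  shows "(\<forall>\<^sub>F \<alpha> in at_right 0. policy_value A P R \<alpha> g $ s \<le> policy_value A P R \<alpha> h $ s) \<or>
         (\<forall>\<^sub>F \<alpha> in at_right 0. \<not> policy_value A P R \<alpha> g $ s \<le> policy_value A P R \<alpha> h $ s)"
proof -
  obtain N D where D: "\<And>\<alpha>. 0 < \<alpha> \<Longrightarrow> poly D \<alpha> \<noteq> 0"
    and N: "\<And>\<alpha>. 0 < \<alpha> \<Longrightarrow> policy_value A P R \<alpha> g $ s = poly N \<alpha> / poly D \<alpha>"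
    using policy_value_rational[OF assms(1,2), where R = R and s = s] by blast
  obtain N' D' where D': "\<And>\<alpha>. 0 < \<alpha> \<Longrightarrow> poly D' \<alpha> \<noteq> 0"
    and N': "\<And>\<alpha>. 0 < \<alpha> \<Longrightarrow> policy_value A P R \<alpha> h $ s = poly N' \<alpha> / poly D' \<alpha>"
    using policy_value_rational[OF assms(1,3), where R = R and s = s] by blast
  let ?q = "\<lambda>\<alpha>. poly (N' * D - N * D') \<alpha> / poly (D' * D) \<alpha>"
  have diff: "\<forall>\<^sub>F \<alpha> in at_right 0. policy_value A P R \<alpha> h $ s - policy_value A P R \<alpha> g $ s = ?q \<alpha>"
    using eventually_at_right_less[of 0]
    by eventually_elim (simp add: N N' D D' field_simps)
  from quotient_sign_eventually_constant_at_right[of "N' * D - N * D'" "D' * D" 0] show ?thesis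
  proof
    assume "\<forall>\<^sub>F \<alpha> in at_right 0. 0 \<le> ?q \<alpha>"
    with diff have "\<forall>\<^sub>F \<alpha> in at_right 0. policy_value A P R \<alpha> g $ s \<le> policy_value A P R \<alpha> h $ s"
      by eventually_elim simp
    then show ?thesis ..
  next
    assume "\<forall>\<^sub>F \<alpha> in at_right 0. ?q \<alpha> < 0"
    with diff have "\<forall>\<^sub>F \<alpha> in at_right 0. \<not> policy_value A P R \<alpha> g $ s \<le> policy_value A P R \<alpha> h $ s"
      by eventually_elim simp
    then show ?thesis ..
  qed
qed

lemma pure_policy_value_order_stable:
  fixes A :: "'s::finite \<Rightarrow> 'a set"
  assumes "mdp A P"
  obtains \<epsilon> :: real where "0 < \<epsilon>"
    and "\<And>\<alpha> \<beta> d d' s. 0 < \<alpha> \<Longrightarrow> \<alpha> < \<epsilon> \<Longrightarrow> 0 < \<beta> \<Longrightarrow> \<beta> < \<epsilon> \<Longrightarrow>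
      \<forall>s. d s \<in> A s \<Longrightarrow> \<forall>s. d' s \<in> A s \<Longrightarrow>
      policy_value A P R \<alpha> (pure_policy d') $ s \<le> policy_value A P R \<alpha> (pure_policy d) $ s \<longleftrightarrow>
      policy_value A P R \<beta> (pure_policy d') $ s \<le> policy_value A P R \<beta> (pure_policy d) $ s"
proof -
  have fin: "\<forall>s. finite (A s)"
    using assms by (simp add: mdp_def)
  define pure_le where "pure_le = (\<lambda>(d, d', s) \<alpha>.
    policy_value A P R \<alpha> (pure_policy d') $ s \<le> policy_value A P R \<alpha> (pure_policy d) $ s)"
  let ?T = "Pi UNIV A \<times> Pi UNIV A \<times> (UNIV :: 's set)"
  have "\<forall>\<^sub>F \<alpha> in at_right 0. \<forall>i\<in>?T. pure_le i \<alpha> \<longleftrightarrow> (\<forall>\<^sub>F \<beta> in at_right 0. pure_le i \<beta>)"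
  proof (rule eventually_ball_iff_eventually)
    show "finite ?T"
      using finite_Pi_UNIV[OF fin] by simp
    fix i assume "i \<in> ?T"
    then obtain d d' s where "i = (d, d', s)" "\<forall>s. d s \<in> A s" "\<forall>s. d' s \<in> A s"
      by (auto simp: Pi_iff)
    then show "(\<forall>\<^sub>F \<alpha> in at_right 0. pure_le i \<alpha>) \<or> (\<forall>\<^sub>F \<alpha> in at_right 0. \<not> pure_le i \<alpha>)"
      unfolding pure_le_def
      using policy_value_order_eventually_constant[OF assms stationary_pure_policy stationary_pure_policy]
        fin by simp
  qed
  then obtain \<epsilon> :: real where "0 < \<epsilon>"
    and stable: "\<forall>\<alpha>>0. \<alpha> < \<epsilon> \<longrightarrow> (\<forall>i\<in>?T. pure_le i \<alpha> \<longleftrightarrow> (\<forall>\<^sub>F \<beta> in at_right 0. pure_le i \<beta>))"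
    unfolding eventually_at_right_field by blast
  show ?thesis
  proof (rule that[OF \<open>0 < \<epsilon>\<close>])
    fix \<alpha> \<beta> :: real and d d' s
    assume "0 < \<alpha>" "\<alpha> < \<epsilon>" "0 < \<beta>" "\<beta> < \<epsilon>" "\<forall>s. d s \<in> A s" "\<forall>s. d' s \<in> A s"
    then have "pure_le (d, d', s) \<alpha> \<longleftrightarrow> pure_le (d, d', s) \<beta>"
      using stable by (simp add: Pi_iff)
    then show "policy_value A P R \<alpha> (pure_policy d') $ s \<le> policy_value A P R \<alpha> (pure_policy d) $ s \<longleftrightarrow>
      policy_value A P R \<beta> (pure_policy d') $ s \<le> policy_value A P R \<beta> (pure_policy d) $ s"
      by (simp add: pure_le_def)
  qed
qed

lemma blackwell_optimal_pure_policy: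
  assumes "mdp A P"
  obtains d \<alpha>0 where "\<forall>s. d s \<in> A s" "0 < \<alpha>0"
    and "\<And>\<alpha> g s. 0 < \<alpha> \<Longrightarrow> \<alpha> \<le> \<alpha>0 \<Longrightarrow> stationary A g \<Longrightarrow>
      policy_value A P R \<alpha> g $ s \<le> policy_value A P R \<alpha> (pure_policy d) $ s"
proof -
  have fin: "\<forall>s. finite (A s)"
    using assms by (simp add: mdp_def)
  obtain \<epsilon> :: real where "0 < \<epsilon>"
    and stable: "\<And>\<alpha> \<beta> d d' s. 0 < \<alpha> \<Longrightarrow> \<alpha> < \<epsilon> \<Longrightarrow> 0 < \<beta> \<Longrightarrow> \<beta> < \<epsilon> \<Longrightarrow>
      \<forall>s. d s \<in> A s \<Longrightarrow> \<forall>s. d' s \<in> A s \<Longrightarrow>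
      policy_value A P R \<alpha> (pure_policy d') $ s \<le> policy_value A P R \<alpha> (pure_policy d) $ s \<longleftrightarrow>
      policy_value A P R \<beta> (pure_policy d') $ s \<le> policy_value A P R \<beta> (pure_policy d) $ s"
    using pure_policy_value_order_stable[OF assms] by blast
  define \<beta> where "\<beta> = \<epsilon> / 2"
  have "0 < \<beta>" "\<beta> < \<epsilon>"
    using \<open>0 < \<epsilon>\<close> by (simp_all add: \<beta>_def)
  obtain d where d: "\<forall>s. d s \<in> A s"
    and adv: "\<forall>s. \<forall>a\<in>A s. advantage P R \<beta> (policy_value A P R \<beta> (pure_policy d)) s a \<le> 0"
    by (rule ex_pure_policy_advantage_nonpos[OF assms \<open>0 < \<beta>\<close>, where R = R])
  have pure_optimal: "policy_value A P R \<alpha> (pure_policy d') $ s \<le> policy_value A P R \<alpha> (pure_policy d) $ s"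
    if "\<forall>s. d' s \<in> A s" "0 < \<alpha>" "\<alpha> \<le> \<beta>" for d' s \<alpha>
  proof -
    have "policy_value A P R \<beta> (pure_policy d') $ s \<le> policy_value A P R \<beta> (pure_policy d) $ s"
      using policy_value_le_if_advantage_nonpos[OF assms \<open>0 < \<beta>\<close> adv stationary_pure_policy[OF that(1) fin]] .
    with stable[OF that(2) _ \<open>0 < \<beta>\<close> \<open>\<beta> < \<epsilon>\<close> d that(1)] that(3) \<open>\<beta> < \<epsilon>\<close> show ?thesis
      by simp
  qed
  show ?thesis
  proof (rule that[OF d \<open>0 < \<beta>\<close>])
    fix \<alpha> g s assume "0 < \<alpha>" "\<alpha> \<le> \<beta>" "stationary A g"
    then show "policy_value A P R \<alpha> g $ s \<le> policy_value A P R \<alpha> (pure_policy d) $ s"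
      using policy_value_le_if_pure_optimal[OF assms _ d pure_optimal] by blast
  qed
qed


section \<open>Single controller additive reward games\<close>

lemma sum_pure_policy_nested:
  assumes "b s \<in> A1 s" "finite (A1 s)"
  shows "(\<Sum>a1\<in>A1 s. \<Sum>a2\<in>A2 s. pure_policy b s a1 * g s a2 * X a1 a2)
       = (\<Sum>a2\<in>A2 s. g s a2 * X (b s) a2)"
proof -
  have "(\<Sum>a1\<in>A1 s. \<Sum>a2\<in>A2 s. pure_policy b s a1 * g s a2 * X a1 a2)
      = (\<Sum>a1\<in>A1 s. pure_policy b s a1 * (\<Sum>a2\<in>A2 s. g s a2 * X a1 a2))"
    by (simp add: sum_distrib_left mult.assoc)
  also have "\<dots> = (\<Sum>a2\<in>A2 s. g s a2 * X (b s) a2)"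
    using assms by (rule sum_pure_policy)
  finally show ?thesis .
qed

lemma gen_mat_pure_first:
  assumes "\<forall>s. b s \<in> A1 s" "\<forall>s. finite (A1 s)"
  shows "gen_mat A1 A2 mu (pure_policy b) g = policy_generator A2 (\<lambda>s s' a. mu s' s (b s) a) g"
  using assms by (simp add: gen_mat_def policy_generator_def sum_pure_policy_nested)

lemma disc_payoff_pure_first:
  assumes "\<forall>s. b s \<in> A1 s" "\<forall>s. finite (A1 s)"
  shows "disc_payoff A1 A2 mu r \<alpha> (pure_policy b) g
       = policy_value A2 (\<lambda>s s' a. mu s' s (b s) a) (\<lambda>s a. r s (b s) a) \<alpha> g"
  using assms
  by (simp add: disc_payoff_def policy_value_def gen_mat_pure_first rew_vec_def policy_reward_def
      sum_pure_policy_nested)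

lemma mdp_fixing_first_player:
  assumes "valid_game A1 A2 mu" "\<forall>s. b s \<in> A1 s"
  shows "mdp A2 (\<lambda>s s' a. mu s' s (b s) a)"
  unfolding mdp_def
proof (intro conjI allI impI)
  show "finite (A2 s)" "A2 s \<noteq> {}" for s
    using assms(1) by (simp_all add: valid_game_def)
  show "0 \<le> mu s' s (b s) a" if "a \<in> A2 s" "s' \<noteq> s" for s s' a
    using assms that by (simp add: valid_game_def)
  fix s a assume "a \<in> A2 s"
  have "(\<Sum>s'\<in>UNIV. mu s' s (b s) a) = mu s s (b s) a + (\<Sum>s'\<in>UNIV - {s}. mu s' s (b s) a)"
    by (rule sum.remove) auto
  also have "\<dots> = 0"
    using assms \<open>a \<in> A2 s\<close> by (simp add: valid_game_def)
  finally show "(\<Sum>s'\<in>UNIV. mu s' s (b s) a) = 0" .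
qed

lemma gen_mat_single_controller:
  assumes "\<forall>s s' a1 a2. a1 \<in> A1 s \<longrightarrow> a2 \<in> A2 s \<longrightarrow> mu s' s a1 a2 = mu2 s' s a2"
    and "stationary A1 f" "stationary A1 f'"
  shows "gen_mat A1 A2 mu f g = gen_mat A1 A2 mu f' g"
proof -
  have "gen_mat A1 A2 mu h g = (\<chi> s s'. \<Sum>a2\<in>A2 s. g s a2 * mu2 s' s a2)" if "stationary A1 h" for h
  proof -
    have "(\<Sum>a1\<in>A1 s. \<Sum>a2\<in>A2 s. h s a1 * g s a2 * mu s' s a1 a2)
        = (\<Sum>a1\<in>A1 s. h s a1 * (\<Sum>a2\<in>A2 s. g s a2 * mu2 s' s a2))" for s s'
      using assms(1) by (intro sum.cong refl) (simp add: sum_distrib_left mult.assoc)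
    then have "(\<Sum>a1\<in>A1 s. \<Sum>a2\<in>A2 s. h s a1 * g s a2 * mu s' s a1 a2)
        = (\<Sum>a1\<in>A1 s. h s a1) * (\<Sum>a2\<in>A2 s. g s a2 * mu2 s' s a2)" for s s'
      by (simp add: sum_distrib_right)
    with that show ?thesis
      by (simp add: gen_mat_def stationary_def)
  qed
  with assms(2,3) show ?thesis
    by simp
qed

lemma rew_vec_additive:
  assumes "\<forall>s a1 a2. a1 \<in> A1 s \<longrightarrow> a2 \<in> A2 s \<longrightarrow> r s a1 a2 = r11 s a1 + r12 s a2"
    and "stationary A1 f" "stationary A2 g"
  shows "rew_vec A1 A2 r f g $ s = (\<Sum>a1\<in>A1 s. f s a1 * r11 s a1) + (\<Sum>a2\<in>A2 s. g s a2 * r12 s a2)"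
proof -
  have "rew_vec A1 A2 r f g $ s
      = (\<Sum>a1\<in>A1 s. f s a1 * r11 s a1 * (\<Sum>a2\<in>A2 s. g s a2) + f s a1 * (\<Sum>a2\<in>A2 s. g s a2 * r12 s a2))"
    using assms(1) by (simp add: rew_vec_def algebra_simps sum.distrib sum_distrib_left cong: sum.cong)
  also have "\<dots> = (\<Sum>a1\<in>A1 s. f s a1 * r11 s a1) * (\<Sum>a2\<in>A2 s. g s a2)
        + (\<Sum>a1\<in>A1 s. f s a1) * (\<Sum>a2\<in>A2 s. g s a2 * r12 s a2)"
    by (simp add: sum.distrib sum_distrib_right)
  finally show ?thesis
    using assms(2,3) by (simp add: stationary_def)
qed

lemma additive_reward_best_response:
  assumes "valid_game A1 A2 mu"
    and mu2: "\<forall>s s' a1 a2. a1 \<in> A1 s \<longrightarrow> a2 \<in> A2 s \<longrightarrow> mu s' s a1 a2 = mu2 s' s a2"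
    and r1: "\<forall>s a1 a2. a1 \<in> A1 s \<longrightarrow> a2 \<in> A2 s \<longrightarrow> r1 s a1 a2 = r11 s a1 + r12 s a2"
    and b: "\<forall>s. b s \<in> A1 s" "\<forall>s. \<forall>a\<in>A1 s. r11 s a \<le> r11 s (b s)"
    and f: "stationary A1 f" and g: "stationary A2 g" and "0 < \<alpha>"
  shows "disc_payoff A1 A2 mu r1 \<alpha> f g $ s \<le> disc_payoff A1 A2 mu r1 \<alpha> (pure_policy b) g $ s"
proof -
  have fin: "\<forall>s. finite (A1 s)"
    using assms(1) by (simp add: valid_game_def)
  let ?Q = "gen_mat A1 A2 mu (pure_policy b) g"
  have same_generator: "gen_mat A1 A2 mu f g = ?Q"
    by (rule gen_mat_single_controller[OF mu2 f stationary_pure_policy[OF b(1) fin]])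
  have "generator ?Q"
    unfolding gen_mat_pure_first[OF b(1) fin]
    by (rule generator_policy_generator[OF mdp_fixing_first_player[OF assms(1) b(1)] g])
  moreover have "rew_vec A1 A2 r1 f g $ t \<le> rew_vec A1 A2 r1 (pure_policy b) g $ t" for t
  proof -
    have "(\<Sum>a1\<in>A1 t. f t a1 * r11 t a1) \<le> (\<Sum>a1\<in>A1 t. f t a1 * r11 t (b t))"
      using f b(2) unfolding stationary_def by (intro sum_mono mult_left_mono) auto
    also have "\<dots> = (\<Sum>a1\<in>A1 t. pure_policy b t a1 * r11 t a1)"
      using f b(1) fin by (simp add: stationary_def sum_pure_policy flip: sum_distrib_right)
    finally show ?thesis
      by (simp add: rew_vec_additive[OF r1 f g] rew_vec_additive[OF r1 stationary_pure_policy[OF b(1) fin] g])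
  qed
  ultimately show ?thesis
    unfolding disc_payoff_def same_generator by (rule resolvent_mono[OF _ \<open>0 < \<alpha>\<close>])
qed

lemma single_controller_blackwell_nash:
  assumes "valid_game A1 A2 mu"
    and mu2: "\<forall>s s' a1 a2. a1 \<in> A1 s \<longrightarrow> a2 \<in> A2 s \<longrightarrow> mu s' s a1 a2 = mu2 s' s a2"
    and r1: "\<forall>s a1 a2. a1 \<in> A1 s \<longrightarrow> a2 \<in> A2 s \<longrightarrow> r1 s a1 a2 = r11 s a1 + r12 s a2"
    and b: "\<forall>s. b s \<in> A1 s" "\<forall>s. \<forall>a\<in>A1 s. r11 s a \<le> r11 s (b s)"
  obtains d \<alpha>0 where "\<forall>s. d s \<in> A2 s" "0 < \<alpha>0"
    and "\<And>\<alpha>. 0 < \<alpha> \<Longrightarrow> \<alpha> \<le> \<alpha>0 \<Longrightarrow> disc_nash A1 A2 mu r1 r2 \<alpha> (pure_policy b) (pure_policy d)"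
proof -
  have fin: "\<forall>s. finite (A1 s)" "\<forall>s. finite (A2 s)"
    using assms(1) by (simp_all add: valid_game_def)
  let ?P = "\<lambda>s s' a. mu s' s (b s) a" and ?R = "\<lambda>s a. r2 s (b s) a"
  obtain d \<alpha>0 where d: "\<forall>s. d s \<in> A2 s" and "0 < \<alpha>0" and blackwell:
    "\<And>\<alpha> g s. 0 < \<alpha> \<Longrightarrow> \<alpha> \<le> \<alpha>0 \<Longrightarrow> stationary A2 g \<Longrightarrow>
      policy_value A2 ?P ?R \<alpha> g $ s \<le> policy_value A2 ?P ?R \<alpha> (pure_policy d) $ s"
    using blackwell_optimal_pure_policy[OF mdp_fixing_first_player[OF assms(1) b(1)], where R = ?R]
    by blast
  note stat_b = stationary_pure_policy[OF b(1) fin(1)] and stat_d = stationary_pure_policy[OF d fin(2)]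
  have "disc_nash A1 A2 mu r1 r2 \<alpha> (pure_policy b) (pure_policy d)" if "0 < \<alpha>" "\<alpha> \<le> \<alpha>0" for \<alpha>
    unfolding disc_nash_def
  proof (intro conjI allI impI stat_b stat_d)
    fix f s assume "stationary A1 f"
    then show "disc_payoff A1 A2 mu r1 \<alpha> f (pure_policy d) $ s
             \<le> disc_payoff A1 A2 mu r1 \<alpha> (pure_policy b) (pure_policy d) $ s"
      by (rule additive_reward_best_response[OF assms(1) mu2 r1 b _ stat_d that(1)])
  next
    fix g s assume "stationary A2 g"
    then show "disc_payoff A1 A2 mu r2 \<alpha> (pure_policy b) g $ s
             \<le> disc_payoff A1 A2 mu r2 \<alpha> (pure_policy b) (pure_policy d) $ s"
      unfolding disc_payoff_pure_first[OF b(1) fin(1)] by (rule blackwell[OF that])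
  qed
  with d \<open>0 < \<alpha>0\<close> show ?thesis
    using that by blast
qed

theorem theorem4:
  fixes A1 :: "'s::finite \<Rightarrow> 'a1 set" and A2 :: "'s \<Rightarrow> 'a2 set"
    and r1 r2 :: "'s \<Rightarrow> 'a1 \<Rightarrow> 'a2 \<Rightarrow> real"
    and mu :: "'s \<Rightarrow> 's \<Rightarrow> 'a1 \<Rightarrow> 'a2 \<Rightarrow> real"
  assumes "valid_game A1 A2 mu"
    and "SC_AR A1 A2 r1 mu"
  shows "\<exists>f g \<alpha>0. deterministic A1 f \<and> deterministic A2 g \<and> \<alpha>0 > 0 \<and>
           (\<forall>\<alpha>. 0 < \<alpha> \<and> \<alpha> \<le> \<alpha>0 \<longrightarrow> disc_nash A1 A2 mu r1 r2 \<alpha> f g)"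
proof -
  obtain mu2 r11 r12 where
    mu2: "\<forall>s s' a1 a2. a1 \<in> A1 s \<longrightarrow> a2 \<in> A2 s \<longrightarrow> mu s' s a1 a2 = mu2 s' s a2" and
    r1: "\<forall>s a1 a2. a1 \<in> A1 s \<longrightarrow> a2 \<in> A2 s \<longrightarrow> r1 s a1 a2 = r11 s a1 + r12 s a2"
    using assms(2) unfolding SC_AR_def by blast
  have fin: "\<forall>s. finite (A1 s)" "\<forall>s. finite (A2 s)" and ne: "\<forall>s. A1 s \<noteq> {}"
    using assms(1) by (simp_all add: valid_game_def)
  have "\<exists>b\<in>A1 s. \<forall>a\<in>A1 s. r11 s a \<le> r11 s b" for s
    using fin(1) ne ex_is_arg_min_if_finite[of "A1 s" "\<lambda>a. - r11 s a"]
    by (auto simp: is_arg_min_linorder)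
  then obtain b where b: "\<forall>s. b s \<in> A1 s" "\<forall>s. \<forall>a\<in>A1 s. r11 s a \<le> r11 s (b s)"
    by metis
  obtain d \<alpha>0 where d: "\<forall>s. d s \<in> A2 s" and "0 < \<alpha>0"
    and nash: "\<And>\<alpha>. 0 < \<alpha> \<Longrightarrow> \<alpha> \<le> \<alpha>0 \<Longrightarrow> disc_nash A1 A2 mu r1 r2 \<alpha> (pure_policy b) (pure_policy d)"
    using single_controller_blackwell_nash[OF assms(1) mu2 r1 b] by blast
  show ?thesis
    using deterministic_pure_policy[OF b(1) fin(1)] deterministic_pure_policy[OF d fin(2)]
      \<open>0 < \<alpha>0\<close> nash by blast
qed

end
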